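(* Let $k$ be an algebraically closed field of characteristic zero, $n\ge1$, $q\in k$ a primitive $2n$-th root of unity, $a\in k\setminus\{0\}$. Let $\mathfrak wH_{4n}$ be the weak Hopf algebra generated by $Z,X$ with $Z^{2n+1}=Z$, $ZX=qXZ$, $X^2=0$ and comultiplication $\Delta(Z)=Z\otimes Z+a(1-q^{-2})Z^{n+1}X\otimes ZX$, $\Delta(X)=X\otimes 1+Z^n\otimes X$ (tensor products of modules are formed via $\Delta$). For $i\in\mathbb Z_{2n}$ let $S_i$ be the $1$-dimensional module with $X$ acting by $0$ and $Z$ by $q^i$; $M_i$ the $2$-dimensional module with basis $v_1^i,v_2^i$, $Xv_1^i=v_2^i$, $Xv_2^i=0$, $Zv_1^i=q^iv_1^i$, $Zv_2^i=q^{i+1}v_2^i$; $N_0$ the $1$-dimensional module on which $Z,X$ act by $0$; $N_1$ the $2$-dimensional module with basis $w_1,w_2$, $Xw_1=w_2$, $Xw_2=0$, $Z$ acting by $0$. Then for all $i,j\in\mathbb Z_{2n}$ (indices modulo $2n$): (1) $S_i\otimes S_j\cong S_{i+j}\cong S_j\otimes S_i$; (2) $S_i\otimes M_j\cong M_{i+j}\cong M_j\otimes S_i$; (3) $M_i\otimes M_j\cong M_{i+j}\oplus M_{i+j+1}\cong M_j\otimes M_i$; (4) $N_0\otimes N_0\cong N_0\cong N_0\otimes S_i\cong S_i\otimes N_0$; (5) $N_0\otimes N_1\cong N_0\oplus N_0\cong N_0\otimes M_i$; (6) $N_1\otimes N_0\cong N_1\cong M_i\otimes N_0\cong N_1\otimes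 S_i\cong S_i\otimes N_1$; (7) $N_1\otimes N_1\cong N_1\oplus N_1\cong N_1\otimes M_i\cong M_i\otimes N_1$. *)

theory Defs
  imports "Jordan_Normal_Form.Matrix" "HOL-Computational_Algebra.Polynomial"
begin

text \<open>A finite-dimensional module over the weak Hopf algebra wH_4n is represented
  by the pair of square matrices (action of Z, action of X) on k^d.\<close>

type_synonym 'a wmod = "'a mat \<times> 'a mat"

definition alg_closed_field :: "'a::field itself \<Rightarrow> bool" where
  "alg_closed_field _ = (\<forall>p::'a poly. degree p \<ge> 1 \<longrightarrow> (\<exists>x. poly p x = 0))"

definition primitive_root :: "nat \<Rightarrow> 'a::field \<Rightarrow> bool" where
  "primitive_root m q = (q ^ m = 1 \<and> (\<forall>j. 0 < j \<and> j < m \<longrightarrow> q ^ j \<noteq> 1))"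

text \<open>Kronecker product; basis vector e_i (x) e_j has index i * dim B + j.\<close>
definition kron :: "'a::semiring_1 mat \<Rightarrow> 'a mat \<Rightarrow> 'a mat" where
  "kron A B = mat (dim_row A * dim_row B) (dim_col A * dim_col B)
     (\<lambda>(i,j). A $$ (i div dim_row B, j div dim_col B) * B $$ (i mod dim_row B, j mod dim_col B))"

text \<open>Tensor product of modules via the comultiplication
  Delta(Z) = Z(x)Z + a(1-q^-2) Z^(n+1)X (x) ZX,  Delta(X) = X(x)1 + Z^n(x)X.\<close>
definition wtensor :: "nat \<Rightarrow> 'a::field \<Rightarrow> 'a \<Rightarrow> 'a wmod \<Rightarrow> 'a wmod \<Rightarrow> 'a wmod" where
  "wtensor n q a V W = (let (Z1, X1) = V; (Z2, X2) = W in
     (kron Z1 Z2 + (a * (1 - inverse (q ^ 2))) \<cdot>\<^sub>m kron ((Z1 ^\<^sub>m (n + 1)) * X1) (Z2 * X2),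
      kron X1 (1\<^sub>m (dim_row Z2)) + kron (Z1 ^\<^sub>m n) X2))"

definition wdsum :: "'a::zero wmod \<Rightarrow> 'a wmod \<Rightarrow> 'a wmod" where
  "wdsum V W = (let (Z1, X1) = V; (Z2, X2) = W; d1 = dim_row Z1; d2 = dim_row Z2 in
     (four_block_mat Z1 (0\<^sub>m d1 d2) (0\<^sub>m d2 d1) Z2,
      four_block_mat X1 (0\<^sub>m d1 d2) (0\<^sub>m d2 d1) X2))"

definition wiso :: "'a::field wmod \<Rightarrow> 'a wmod \<Rightarrow> bool" (infix \<open>\<cong>\<^sub>w\<close> 50) where
  "wiso V W = (let (Z1, X1) = V; (Z2, X2) = W; d = dim_row Z1 in
     dim_row Z2 = d \<and>
     (\<exists>P. P \<in> carrier_mat d d \<and> invertible_mat P \<and> P * Z1 = Z2 * P \<and> P * X1 = X2 * P))"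

definition Smod :: "'a::field \<Rightarrow> nat \<Rightarrow> 'a wmod" where
  "Smod q i = (mat 1 1 (\<lambda>_. q ^ i), 0\<^sub>m 1 1)"

definition Mmod :: "'a::field \<Rightarrow> nat \<Rightarrow> 'a wmod" where
  "Mmod q i = (mat 2 2 (\<lambda>(r,c). if r = c then q ^ (i + r) else 0),
               mat 2 2 (\<lambda>(r,c). if r = 1 \<and> c = 0 then 1 else 0))"

definition N0mod :: "'a::field wmod" where
  "N0mod = (0\<^sub>m 1 1, 0\<^sub>m 1 1)"

definition N1mod :: "'a::field wmod" where
  "N1mod = (0\<^sub>m 2 2, mat 2 2 (\<lambda>(r,c). if r = 1 \<and> c = 0 then 1 else 0))"

end

theory Submission
  imports Defs
begin

(* Tensoring with a one-dimensional module (Z acting by c, X by 0) rescales Z by c and, from the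
  left, X by c^n; for N0 and N1, where Z = 0, the coproduct terms vanish because 0^n = 0.
  The only real work is M_i (x) M_j. In the Kronecker basis e0, ..., e3 the matrix of Z is
  diagonal with eigenvalues q^(i+j), q^(i+j+1), q^(i+j+1), q^(i+j+2), except for an entry d in
  the corner (3,0) coming from the second summand of Delta(Z); X maps e0 to p e1 + e2, e1 to e3
  and e2 to p' e3, where p = q^(in) and p' = q^((i+1)n) = -p because q^n = -1. Hence X kills
  X e0, and shifting e0 by a multiple of e3 makes it a Z-eigenvector (when q^2 = 1 the factor
  1 - q^-2 makes d = 0), so the module splits as M_(i+j) + M_(i+j+1). *)

(* Entrywise comparison of concrete matrices: the index ranges are read off B, so that for
  explicitly given B they unfold to explicit lists and simp can check every entry. *)
lemma eq_matI_upt: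
  assumes "dim_row A = dim_row B" "dim_col A = dim_col B"
    and "list_all (\<lambda>i. list_all (\<lambda>j. A $$ (i, j) = B $$ (i, j)) [0..<dim_col B]) [0..<dim_row B]"
  shows "A = B"
  using assms by (intro eq_matI) (auto simp: list_all_iff)

lemma mat_of_rows_list_carrier: "length rs = m \<Longrightarrow> mat_of_rows_list n rs \<in> carrier_mat m n"
  by (simp add: mat_of_rows_list_def)

lemmas entrywise_simps =
  mat_of_rows_list_def scalar_prod_def atLeastLessThan_upt sum_set_upt_conv_sum_list_nat upt_rec

lemma kron_one_by_one_left:
  assumes "A \<in> carrier_mat 1 1"
  shows "kron A B = A $$ (0, 0) \<cdot>\<^sub>m B"
  using assms by (intro eq_matI) (auto simp: kron_def)

lemma kron_one_by_one_right:
  fixes A B :: "'a::comm_semiring_1 mat"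
  assumes "B \<in> carrier_mat 1 1"
  shows "kron A B = B $$ (0, 0) \<cdot>\<^sub>m A"
  using assms by (intro eq_matI) (auto simp: kron_def mult.commute)

lemma zero_smult_mat: "(0 :: 'a::semiring_1) \<cdot>\<^sub>m A = 0\<^sub>m (dim_row A) (dim_col A)"
  by (intro eq_matI) auto

lemma pow_one_by_one_mat_index:
  fixes A :: "'a::comm_semiring_1 mat"
  assumes "A \<in> carrier_mat 1 1"
  shows "(A ^\<^sub>m k) $$ (0, 0) = A $$ (0, 0) ^ k"
  using assms by (induction k) (auto simp: scalar_prod_def mult.commute)

lemma pow_two_by_two_diag:
  "mat_of_rows_list 2 [[x0, 0], [0, x1]] ^\<^sub>m k =
   mat_of_rows_list 2 [[x0 ^ k, 0], [0, (x1 :: 'a::comm_semiring_1) ^ k]]"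
proof (induction k)
  case (Suc k)
  show ?case
    unfolding pow_mat.simps Suc by (rule eq_matI_upt) (simp_all add: entrywise_simps mult.commute)
qed (rule eq_matI_upt, simp_all add: entrywise_simps)

definition wmod_carrier :: "nat \<Rightarrow> 'a::field wmod set" where
  "wmod_carrier d = carrier_mat d d \<times> carrier_mat d d"

lemma wiso_iff_similar_mat_wit:
  assumes "(Z1, X1) \<in> wmod_carrier d" "(Z2, X2) \<in> wmod_carrier d"
  shows "(Z1, X1) \<cong>\<^sub>w (Z2, X2) \<longleftrightarrow>
    (\<exists>P Q. similar_mat_wit Z2 Z1 P Q \<and> similar_mat_wit X2 X1 P Q)"
proof
  assume "(Z1, X1) \<cong>\<^sub>w (Z2, X2)"
  then obtain P
    where P: "P \<in> carrier_mat d d" "invertible_mat P" "P * Z1 = Z2 * P" "P * X1 = X2 * P"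
    using assms by (auto simp: wiso_def wmod_carrier_def)
  then obtain Q where PQ: "P * Q = 1\<^sub>m d" and QP: "Q * P = 1\<^sub>m (dim_row Q)"
    by (auto simp: invertible_mat_def inverts_mat_def)
  have Q: "Q \<in> carrier_mat d d"
    using arg_cong[OF PQ, of dim_col] arg_cong[OF QP, of dim_col] P(1) by auto
  have similar: "similar_mat_wit A B P Q"
    if "P * B = A * P" "A \<in> carrier_mat d d" "B \<in> carrier_mat d d" for A B
  proof (rule similar_mat_witI[OF PQ _ _ that(2,3) P(1) Q])
    show "Q * P = 1\<^sub>m d" using QP Q by auto
    have "A = A * P * Q"
      using that(2) P(1) Q PQ by (simp add: assoc_mult_mat[of A d d P d Q d])
    then show "A = P * B * Q" using that(1) by simp
  qed
  have "similar_mat_wit Z2 Z1 P Q" "similar_mat_wit X2 X1 P Q"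
    using similar P(3,4) assms unfolding wmod_carrier_def by auto
  then show "\<exists>P Q. similar_mat_wit Z2 Z1 P Q \<and> similar_mat_wit X2 X1 P Q" by blast
next
  assume "\<exists>P Q. similar_mat_wit Z2 Z1 P Q \<and> similar_mat_wit X2 X1 P Q"
  then obtain P Q where Z: "similar_mat_wit Z2 Z1 P Q" and X: "similar_mat_wit X2 X1 P Q" by blast
  have "Z2 \<in> carrier_mat d d" using assms(2) by (simp add: wmod_carrier_def)
  from similar_mat_witD2[OF this Z]
  have PQ: "P \<in> carrier_mat d d" "Q \<in> carrier_mat d d" "P * Q = 1\<^sub>m d" "Q * P = 1\<^sub>m d"
    by auto
  have commute: "P * B = A * P" if "similar_mat_wit A B P Q" "B \<in> carrier_mat d d" for A B
  proof -
    from similar_mat_witD[OF refl that(1)] have A: "A = P * B * Q"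
      by blast
    have "A * P = P * B * (Q * P)"
      unfolding A using PQ that(2) by (intro assoc_mult_mat) auto
    also have "\<dots> = P * B" using PQ that(2) by simp
    finally show ?thesis by simp
  qed
  have "invertible_mat P"
    using PQ by (auto simp: invertible_mat_def inverts_mat_def)
  moreover have "P * Z1 = Z2 * P" "P * X1 = X2 * P"
    using commute[OF Z] commute[OF X] assms by (auto simp: wmod_carrier_def)
  ultimately show "(Z1, X1) \<cong>\<^sub>w (Z2, X2)"
    using PQ assms by (auto simp: wiso_def wmod_carrier_def)
qed

lemma wiso_refl: "V \<in> wmod_carrier d \<Longrightarrow> V \<cong>\<^sub>w V"
  by (cases V) (auto simp: wiso_iff_similar_mat_wit wmod_carrier_def intro!: similar_mat_wit_refl)

lemma wiso_sym:
  assumes "V \<in> wmod_carrier d" "W \<in> wmod_carrier d" "V \<cong>\<^sub>w W"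
  shows "W \<cong>\<^sub>w V"
  using assms by (cases V, cases W) (auto simp: wiso_iff_similar_mat_wit intro: similar_mat_wit_sym)

lemma wiso_trans:
  assumes "U \<in> wmod_carrier d" "V \<in> wmod_carrier d" "W \<in> wmod_carrier d"
    and "U \<cong>\<^sub>w V" "V \<cong>\<^sub>w W"
  shows "U \<cong>\<^sub>w W"
  using assms
  by (cases U, cases V, cases W) (auto simp: wiso_iff_similar_mat_wit intro: similar_mat_wit_trans)

lemma wisoI:
  assumes "(Z1, X1) \<in> wmod_carrier d" "(Z2, X2) \<in> wmod_carrier d"
    and "P \<in> carrier_mat d d" "Q \<in> carrier_mat d d" "P * Q = 1\<^sub>m d" "Q * P = 1\<^sub>m d"
    and "P * Z1 = Z2 * P" "P * X1 = X2 * P"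
  shows "(Z1, X1) \<cong>\<^sub>w (Z2, X2)"
proof -
  have "invertible_mat P"
    using assms by (auto simp: invertible_mat_def inverts_mat_def)
  then show ?thesis using assms by (auto simp: wiso_def wmod_carrier_def)
qed

lemma wdsum_carrier:
  "V \<in> wmod_carrier d \<Longrightarrow> W \<in> wmod_carrier e \<Longrightarrow> wdsum V W \<in> wmod_carrier (d + e)"
  by (cases V, cases W) (auto simp: wdsum_def wmod_carrier_def)

definition one_dim_mod :: "'a::field \<Rightarrow> 'a wmod" where
  "one_dim_mod c = (mat 1 1 (\<lambda>_. c), 0\<^sub>m 1 1)"

definition two_dim_mod :: "'a::field \<Rightarrow> 'a \<Rightarrow> 'a \<Rightarrow> 'a wmod" where
  "two_dim_mod z0 z1 x =
    (mat_of_rows_list 2 [[z0, 0], [0, z1]], mat_of_rows_list 2 [[0, 0], [x, 0]])"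

definition four_dim_mod :: "'a::field \<Rightarrow> 'a \<Rightarrow> 'a \<Rightarrow> 'a \<Rightarrow> 'a \<Rightarrow> 'a \<Rightarrow> 'a \<Rightarrow> 'a wmod" where
  "four_dim_mod z0 z1 z2 z3 d p p' =
    (mat_of_rows_list 4 [[z0, 0, 0, 0], [0, z1, 0, 0], [0, 0, z2, 0], [d, 0, 0, z3]],
     mat_of_rows_list 4 [[0, 0, 0, 0], [p, 0, 0, 0], [1, 0, 0, 0], [0, 1, p', 0]])"

lemma one_dim_mod_carrier: "one_dim_mod c \<in> wmod_carrier 1"
  by (simp add: one_dim_mod_def wmod_carrier_def)

lemma two_dim_mod_carrier: "two_dim_mod z0 z1 x \<in> wmod_carrier 2"
  by (simp add: two_dim_mod_def wmod_carrier_def mat_of_rows_list_carrier)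

lemma four_dim_mod_carrier: "four_dim_mod z0 z1 z2 z3 d p p' \<in> wmod_carrier 4"
  by (simp add: four_dim_mod_def wmod_carrier_def mat_of_rows_list_carrier)

lemma Smod_eq: "Smod q i = one_dim_mod (q ^ i)"
  by (simp add: Smod_def one_dim_mod_def)

lemma N0mod_eq: "N0mod = one_dim_mod 0"
  by (auto simp: N0mod_def one_dim_mod_def intro!: eq_matI)

lemma Mmod_eq: "Mmod q i = two_dim_mod (q ^ i) (q ^ (i + 1)) 1"
  unfolding Mmod_def two_dim_mod_def by (auto intro!: eq_matI_upt simp: entrywise_simps)

lemma N1mod_eq: "N1mod = two_dim_mod 0 0 1"
  unfolding N1mod_def two_dim_mod_def by (auto intro!: eq_matI_upt simp: entrywise_simps)

lemma Mmod_carrier: "Mmod q i \<in> wmod_carrier 2"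
  by (simp add: Mmod_eq two_dim_mod_carrier)

lemma wtensor_one_dim_left:
  assumes "(Z, X) \<in> wmod_carrier d"
  shows "wtensor n q a (one_dim_mod c) (Z, X) = (c \<cdot>\<^sub>m Z, c ^ n \<cdot>\<^sub>m X)"
  using assms
  by (auto simp: wtensor_def one_dim_mod_def wmod_carrier_def kron_one_by_one_left
      pow_one_by_one_mat_index zero_smult_mat)

lemma wtensor_one_dim_right:
  assumes "(Z, X) \<in> wmod_carrier d"
  shows "wtensor n q a (Z, X) (one_dim_mod c) = (c \<cdot>\<^sub>m Z, X)"
  using assms
  by (auto simp: wtensor_def one_dim_mod_def wmod_carrier_def kron_one_by_one_right zero_smult_mat)

lemma smult_two_by_two_diag:
  fixes c :: "'a::mult_zero"
  shows "c \<cdot>\<^sub>m mat_of_rows_list 2 [[z0, 0], [0, z1]] =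
    mat_of_rows_list 2 [[c * z0, 0], [0, c * z1]]"
  by (rule eq_matI_upt) (simp_all add: entrywise_simps)

lemma smult_two_by_two_nilpotent:
  fixes c :: "'a::mult_zero"
  shows "c \<cdot>\<^sub>m mat_of_rows_list 2 [[0, 0], [x, 0]] = mat_of_rows_list 2 [[0, 0], [c * x, 0]]"
  by (rule eq_matI_upt) (simp_all add: entrywise_simps)

lemma wtensor_one_dim_one_dim: "wtensor n q a (one_dim_mod c) (one_dim_mod c') = one_dim_mod (c * c')"
proof -
  have "wtensor n q a (one_dim_mod c) (one_dim_mod c') =
    (c \<cdot>\<^sub>m mat 1 1 (\<lambda>_. c'), c ^ n \<cdot>\<^sub>m 0\<^sub>m 1 1)"
    unfolding one_dim_mod_def[of c']
    by (rule wtensor_one_dim_left[where d = 1]) (simp add: wmod_carrier_def)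
  then show ?thesis by (auto simp: one_dim_mod_def intro!: eq_matI)
qed

lemma wtensor_one_dim_two_dim:
  "wtensor n q a (one_dim_mod c) (two_dim_mod z0 z1 x) = two_dim_mod (c * z0) (c * z1) (c ^ n * x)"
  using wtensor_one_dim_left[OF two_dim_mod_carrier[unfolded two_dim_mod_def]]
  by (simp add: two_dim_mod_def smult_two_by_two_diag smult_two_by_two_nilpotent)

lemma wtensor_two_dim_one_dim:
  "wtensor n q a (two_dim_mod z0 z1 x) (one_dim_mod c) = two_dim_mod (c * z0) (c * z1) x"
  using wtensor_one_dim_right[OF two_dim_mod_carrier[unfolded two_dim_mod_def]]
  by (simp add: two_dim_mod_def smult_two_by_two_diag)

lemma wtensor_two_dim_two_dim:
  "wtensor n q a (two_dim_mod x0 x1 1) (two_dim_mod y0 y1 1) =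
   four_dim_mod (x0 * y0) (x0 * y1) (x1 * y0) (x1 * y1)
     (a * (1 - inverse (q ^ 2)) * x1 ^ (n + 1) * y1) (x0 ^ n) (x1 ^ n)"
  unfolding wtensor_def two_dim_mod_def four_dim_mod_def Let_def prod.case pow_two_by_two_diag
  \<comment> \<open>list lengths appear as \<open>Suc (Suc 0)\<close>; folding them back to 2 lets simp evaluate
    the \<open>div\<close> and \<open>mod\<close> in \<open>kron\<close>\<close>
  by (auto intro!: eq_matI_upt simp: kron_def entrywise_simps numeral_2_eq_2[symmetric])

lemma wdsum_one_dim: "wdsum (one_dim_mod c) (one_dim_mod c') = two_dim_mod c c' 0"
  unfolding wdsum_def one_dim_mod_def two_dim_mod_def Let_def prod.case
  by (auto intro!: eq_matI_upt simp: entrywise_simps)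

lemma wdsum_two_dim:
  "wdsum (two_dim_mod z0 z1 1) (two_dim_mod z2 z3 1) =
   (mat_of_rows_list 4 [[z0, 0, 0, 0], [0, z1, 0, 0], [0, 0, z2, 0], [0, 0, 0, z3]],
    mat_of_rows_list 4 [[0, 0, 0, 0], [1, 0, 0, 0], [0, 0, 0, 0], [0, 0, 1, 0]])"
  unfolding wdsum_def two_dim_mod_def Let_def prod.case
  by (auto intro!: eq_matI_upt simp: entrywise_simps)

lemma two_dim_mod_rescale_iso:
  assumes "x \<noteq> 0" "y \<noteq> 0"
  shows "two_dim_mod z0 z1 x \<cong>\<^sub>w two_dim_mod z0 z1 y"
proof -
  define P :: "'a mat" where "P = mat_of_rows_list 2 [[x, 0], [0, y]]"
  define Q :: "'a mat" where "Q = mat_of_rows_list 2 [[1 / x, 0], [0, 1 / y]]"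
  show ?thesis
    unfolding two_dim_mod_def
    by (rule wisoI[where d = 2 and P = P and Q = Q]; (rule eq_matI_upt)?)
      (simp_all add: P_def Q_def wmod_carrier_def mat_of_rows_list_carrier,
       use assms in \<open>simp_all add: entrywise_simps\<close>)
qed

lemma four_dim_mod_iso_wdsum:
  fixes w0 w1 w2 d p p' :: "'a::field"
  assumes "w0 \<noteq> w2 \<or> d = 0" and "p' = - p"
  shows "four_dim_mod w0 w1 w1 w2 d p p' \<cong>\<^sub>w wdsum (two_dim_mod w0 w1 1) (two_dim_mod w1 w2 1)"
proof -
  define t where "t = d / (w0 - w2)"
  have t: "d + t * w2 = t * w0"
    using assms(1) by (auto simp: t_def field_simps)
  \<comment> \<open>the columns of \<open>Q\<close> are the new basis \<open>e0 + t e3, p e1 + e2, e1, e3\<close>\<close>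
  define P :: "'a mat"
    where "P = mat_of_rows_list 4 [[1, 0, 0, 0], [0, 0, 1, 0], [0, 1, - p, 0], [- t, 0, 0, 1]]"
  define Q :: "'a mat"
    where "Q = mat_of_rows_list 4 [[1, 0, 0, 0], [0, p, 1, 0], [0, 1, 0, 0], [t, 0, 0, 1]]"
  show ?thesis
    unfolding four_dim_mod_def wdsum_two_dim assms(2)
    by (rule wisoI[where d = 4 and P = P and Q = Q]; (rule eq_matI_upt)?)
      (simp_all add: P_def Q_def wmod_carrier_def mat_of_rows_list_carrier,
       use t in \<open>simp_all add: entrywise_simps algebra_simps\<close>)
qed

lemma primitive_root_nonzero:
  fixes q :: "'a::field"
  assumes "primitive_root m q" "m \<ge> 1"
  shows "q \<noteq> 0"
  using assms by (cases m) (auto simp: primitive_root_def)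

lemma primitive_root_power_half:
  fixes q :: "'a::field"
  assumes "primitive_root (2 * n) q" "n \<ge> 1"
  shows "q ^ n = -1"
proof -
  have "(q ^ n) ^ 2 = 1" "q ^ n \<noteq> 1"
    using assms by (auto simp: primitive_root_def power_mult[symmetric] mult.commute)
  then show ?thesis by (simp add: power2_eq_1_iff)
qed

lemma wtensor_Smod_Smod_iso:
  "wtensor n q a (Smod q i) (Smod q j) \<cong>\<^sub>w Smod q (i + j) \<and>
   Smod q (i + j) \<cong>\<^sub>w wtensor n q a (Smod q j) (Smod q i)"
  by (simp add: Smod_eq wtensor_one_dim_one_dim power_add mult.commute
      wiso_refl[OF one_dim_mod_carrier])

lemma wtensor_Smod_Mmod_iso:
  assumes "q \<noteq> 0"
  shows "wtensor n q a (Smod q i) (Mmod q j) \<cong>\<^sub>w Mmod q (i + j) \<and>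
    Mmod q (i + j) \<cong>\<^sub>w wtensor n q a (Mmod q j) (Smod q i)"
proof -
  have "wtensor n q a (Smod q i) (Mmod q j) =
    two_dim_mod (q ^ (i + j)) (q ^ (i + j + 1)) ((q ^ i) ^ n)"
    by (simp add: Smod_eq Mmod_eq wtensor_one_dim_two_dim power_add mult_ac)
  moreover have "wtensor n q a (Mmod q j) (Smod q i) = Mmod q (i + j)"
    by (simp add: Smod_eq Mmod_eq wtensor_two_dim_one_dim power_add mult_ac)
  ultimately show ?thesis
    using assms by (simp add: Mmod_eq two_dim_mod_rescale_iso wiso_refl[OF two_dim_mod_carrier])
qed

lemma wtensor_Mmod_Mmod_iso_wdsum:
  assumes "q \<noteq> 0" "q ^ n = -1"
  shows "wtensor n q a (Mmod q i) (Mmod q j) \<cong>\<^sub>w wdsum (Mmod q (i + j)) (Mmod q (i + j + 1))"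
proof -
  define d where "d = a * (1 - inverse (q ^ 2)) * (q ^ (i + 1)) ^ (n + 1) * q ^ (j + 1)"
  have tensor: "wtensor n q a (Mmod q i) (Mmod q j) =
    four_dim_mod (q ^ (i + j)) (q ^ (i + j + 1)) (q ^ (i + j + 1)) (q ^ (i + j + 2)) d
      ((q ^ i) ^ n) ((q ^ (i + 1)) ^ n)" (is "_ = ?T")
    by (simp add: Mmod_eq wtensor_two_dim_two_dim d_def power_add mult_ac)
  have "q ^ (i + j) \<noteq> q ^ (i + j + 2) \<or> d = 0"
  proof (cases "q ^ 2 = 1")
    case False
    then show ?thesis using assms(1) by (simp add: power_add power2_eq_square)
  qed (simp add: d_def)
  moreover have "(q ^ (i + 1)) ^ n = - ((q ^ i) ^ n)"
    using assms(2) by (simp add: power_mult_distrib)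
  ultimately have "?T \<cong>\<^sub>w
    wdsum (two_dim_mod (q ^ (i + j)) (q ^ (i + j + 1)) 1) (two_dim_mod (q ^ (i + j + 1)) (q ^ (i + j + 2)) 1)"
    by (rule four_dim_mod_iso_wdsum)
  then show ?thesis
    unfolding tensor by (simp add: Mmod_eq add.assoc)
qed

lemma wtensor_Mmod_Mmod_iso:
  assumes "q \<noteq> 0" "q ^ n = -1"
  shows "wtensor n q a (Mmod q i) (Mmod q j) \<cong>\<^sub>w wdsum (Mmod q (i + j)) (Mmod q (i + j + 1)) \<and>
    wdsum (Mmod q (i + j)) (Mmod q (i + j + 1)) \<cong>\<^sub>w wtensor n q a (Mmod q j) (Mmod q i)"
proof
  show "wtensor n q a (Mmod q i) (Mmod q j) \<cong>\<^sub>w wdsum (Mmod q (i + j)) (Mmod q (i + j + 1))"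
    using wtensor_Mmod_Mmod_iso_wdsum[OF assms] .
  have "wtensor n q a (Mmod q j) (Mmod q i) \<in> wmod_carrier 4"
    by (simp add: Mmod_eq wtensor_two_dim_two_dim four_dim_mod_carrier)
  moreover have "wdsum (Mmod q (i + j)) (Mmod q (i + j + 1)) \<in> wmod_carrier 4"
    using wdsum_carrier[OF Mmod_carrier Mmod_carrier] by simp
  ultimately
  show "wdsum (Mmod q (i + j)) (Mmod q (i + j + 1)) \<cong>\<^sub>w wtensor n q a (Mmod q j) (Mmod q i)"
    using wiso_sym wtensor_Mmod_Mmod_iso_wdsum[OF assms, where i = j and j = i] by (metis add.commute)
qed

lemma wtensor_N0mod_iso:
  "wtensor n q a N0mod N0mod \<cong>\<^sub>w N0mod \<and> N0mod \<cong>\<^sub>w wtensor n q a N0mod (Smod q i) \<and>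
    wtensor n q a N0mod (Smod q i) \<cong>\<^sub>w wtensor n q a (Smod q i) N0mod"
  by (simp add: N0mod_eq Smod_eq wtensor_one_dim_one_dim wiso_refl[OF one_dim_mod_carrier])

lemma wtensor_N0mod_N1mod_iso:
  assumes "n \<ge> 1"
  shows "wtensor n q a N0mod N1mod \<cong>\<^sub>w wdsum N0mod N0mod \<and>
    wdsum N0mod N0mod \<cong>\<^sub>w wtensor n q a N0mod (Mmod q i)"
  using assms
  by (simp add: N0mod_eq N1mod_eq Mmod_eq wtensor_one_dim_two_dim wdsum_one_dim power_0_left
      wiso_refl[OF two_dim_mod_carrier])

lemma wtensor_N1mod_iso:
  assumes "q \<noteq> 0"
  shows "wtensor n q a N1mod N0mod \<cong>\<^sub>w N1mod \<and> N1mod \<cong>\<^sub>w wtensor n q a (Mmod q i) N0mod \<and>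
    wtensor n q a (Mmod q i) N0mod \<cong>\<^sub>w wtensor n q a N1mod (Smod q i) \<and>
    wtensor n q a N1mod (Smod q i) \<cong>\<^sub>w wtensor n q a (Smod q i) N1mod"
  using assms
  by (simp add: N0mod_eq N1mod_eq Mmod_eq Smod_eq wtensor_one_dim_two_dim wtensor_two_dim_one_dim
      two_dim_mod_rescale_iso wiso_refl[OF two_dim_mod_carrier])

lemma wtensor_N1mod_N1mod_iso:
  assumes "n \<ge> 1" "q ^ n = -1"
  shows "wtensor n q a N1mod N1mod \<cong>\<^sub>w wdsum N1mod N1mod \<and>
    wdsum N1mod N1mod \<cong>\<^sub>w wtensor n q a N1mod (Mmod q i) \<and>
    wtensor n q a N1mod (Mmod q i) \<cong>\<^sub>w wtensor n q a (Mmod q i) N1mod"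
proof -
  have N1_N1: "wtensor n q a N1mod N1mod = four_dim_mod 0 0 0 0 0 0 0"
    and N1_M: "wtensor n q a N1mod (Mmod q i) = four_dim_mod 0 0 0 0 0 0 0"
    and M_N1: "wtensor n q a (Mmod q i) N1mod = four_dim_mod 0 0 0 0 0 ((q ^ i) ^ n) ((q ^ (i + 1)) ^ n)"
    using assms(1) by (simp_all add: N1mod_eq Mmod_eq wtensor_two_dim_two_dim power_0_left)
  have iso0: "four_dim_mod 0 0 0 0 0 0 (0 :: 'a) \<cong>\<^sub>w wdsum N1mod N1mod"
    and iso: "four_dim_mod 0 0 0 0 0 ((q ^ i) ^ n) ((q ^ (i + 1)) ^ n) \<cong>\<^sub>w wdsum N1mod N1mod"
    unfolding N1mod_eq using assms(2)
    by (simp_all add: four_dim_mod_iso_wdsum power_mult_distrib)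
  have carriers: "four_dim_mod 0 0 0 0 0 p p' \<in> wmod_carrier 4" "wdsum N1mod N1mod \<in> wmod_carrier 4"
    for p p' :: 'a
    using wdsum_carrier[OF two_dim_mod_carrier two_dim_mod_carrier]
    by (simp_all add: N1mod_eq four_dim_mod_carrier)
  have sym0: "wdsum N1mod N1mod \<cong>\<^sub>w four_dim_mod 0 0 0 0 0 0 (0 :: 'a)"
    using wiso_sym[OF carriers(1,2) iso0] .
  have sym: "wdsum N1mod N1mod \<cong>\<^sub>w four_dim_mod 0 0 0 0 0 ((q ^ i) ^ n) ((q ^ (i + 1)) ^ n)"
    using wiso_sym[OF carriers(1,2) iso] .
  show ?thesis
    unfolding N1_N1 N1_M M_N1 using iso0 sym0 wiso_trans[OF carriers(1,2,1) iso0 sym] by blast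
qed

theorem theorem4p2:
  fixes q a :: "'k::field_char_0" and n :: nat
  assumes "alg_closed_field TYPE('k)"
    and "n \<ge> 1"
    and "primitive_root (2 * n) q"
    and "a \<noteq> 0"
  defines "T \<equiv> wtensor n q a"
  shows "\<forall>i j :: nat.
     (T (Smod q i) (Smod q j) \<cong>\<^sub>w Smod q (i + j) \<and> Smod q (i + j) \<cong>\<^sub>w T (Smod q j) (Smod q i)) \<and>
     (T (Smod q i) (Mmod q j) \<cong>\<^sub>w Mmod q (i + j) \<and> Mmod q (i + j) \<cong>\<^sub>w T (Mmod q j) (Smod q i)) \<and>
     (T (Mmod q i) (Mmod q j) \<cong>\<^sub>w wdsum (Mmod q (i + j)) (Mmod q (i + j + 1)) \<and>
        wdsum (Mmod q (i + j)) (Mmod q (i + j + 1)) \<cong>\<^sub>w T (Mmod q j) (Mmod q i)) \<and>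
     (T N0mod N0mod \<cong>\<^sub>w N0mod \<and> N0mod \<cong>\<^sub>w T N0mod (Smod q i) \<and> T N0mod (Smod q i) \<cong>\<^sub>w T (Smod q i) N0mod) \<and>
     (T N0mod N1mod \<cong>\<^sub>w wdsum N0mod N0mod \<and> wdsum N0mod N0mod \<cong>\<^sub>w T N0mod (Mmod q i)) \<and>
     (T N1mod N0mod \<cong>\<^sub>w N1mod \<and> N1mod \<cong>\<^sub>w T (Mmod q i) N0mod \<and> T (Mmod q i) N0mod \<cong>\<^sub>w T N1mod (Smod q i) \<and>
        T N1mod (Smod q i) \<cong>\<^sub>w T (Smod q i) N1mod) \<and>
     (T N1mod N1mod \<cong>\<^sub>w wdsum N1mod N1mod \<and> wdsum N1mod N1mod \<cong>\<^sub>w T N1mod (Mmod q i) \<and>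
        T N1mod (Mmod q i) \<cong>\<^sub>w T (Mmod q i) N1mod)"
proof -
  have q: "q \<noteq> 0" "q ^ n = -1"
    using primitive_root_nonzero[OF assms(3)] primitive_root_power_half[OF assms(3)] assms(2) by auto
  show ?thesis
    unfolding T_def
    using wtensor_Smod_Smod_iso[where q = q] wtensor_Smod_Mmod_iso[OF q(1)] wtensor_Mmod_Mmod_iso[OF q]
      wtensor_N0mod_iso[where q = q] wtensor_N0mod_N1mod_iso[OF assms(2), where q = q]
      wtensor_N1mod_iso[OF q(1)] wtensor_N1mod_N1mod_iso[OF assms(2) q(2)]
    by simp
qed

end
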